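(* Let $G=(V,A)$ be a finite simple graph without loops with $|e|\ge 2$ for all $e\in V$, and $\mathfrak n=\mathfrak n(G)=W\oplus\mathfrak z$. Then $(\Lambda^2\mathfrak n)^{\mathfrak n}=\Lambda^2\mathfrak z$ and $\mathfrak n$ is of TST type. Consequently every Lie bialgebra cobracket $\delta$ on $\mathfrak n$ satisfies $\delta(\mathfrak z)\subseteq\Lambda^2\mathfrak z$ and $\delta(W)\subseteq (W\wedge\mathfrak z)\oplus\Lambda^2\mathfrak z$; more precisely $\delta(z)=\delta_{\mathfrak z}(z)$ and $\delta(v)=\sum_{\alpha\in A}D^\alpha(v)\wedge\alpha+\varphi(v)$ with linear maps $\delta_{\mathfrak z}:\mathfrak z\to\Lambda^2\mathfrak z$, $D^\alpha:W\to W$, $\varphi:W\to\Lambda^2\mathfrak z$ satisfying: $\delta_{\mathfrak z}$ satisfies co-Jacobi; writing $\delta_{\mathfrak z}(\gamma)=\sum_{\alpha<\beta}c_\gamma^{\alpha\beta}\alpha\wedge\beta$, $[D^\alpha,D^\beta]=\sum_\gamma c_\gamma^{\alpha\beta}D^\gamma$; $\sum_\gamma T_\gamma(x)(y)\delta_{\mathfrak z}(\gamma)=\sum_{\gamma,\eta}(T_\gamma(D^\eta x)(y)+T_\gamma(x)(D^\eta y))\gamma\wedge\eta$ for $x,y\in W$; and, writing $\varphi(v)=\sum_{\alpha<\beta}\varphi_{\alpha\beta}(v)\alpha\wedge\beta$, $\sum_\gamma\varphi(D^\gamma v)\wedge\gamma+\sum_{\alpha<\beta}\varphi_{\alpha\beta}(v)(\delta_{\mathfrak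 z}(\alpha)\wedge\beta-\alpha\wedge\delta_{\mathfrak z}(\beta))=0$ for $v\in W$.
   Context: $V=\{e_1,\dots,e_n\}$ ordered, each edge joining $e_i,e_j$ ($i<j$) oriented from $e_i$ to $e_j$, edges $A$ given a fixed total order. $\mathfrak n(G)$ over a field of characteristic zero has basis $V\cup A$, $[e_i,e_j]=\alpha$ if $\alpha$ goes from $e_i$ to $e_j$, $[e_i,e_j]=0$ if not adjacent, edges central; $W=\mathrm{span}(V)$, center $\mathfrak z=\mathrm{span}(A)$. $T_\gamma:W\to W^*$ is defined by $[v,w]=\sum_\gamma T_\gamma(v)(w)\gamma$. $\mathfrak n$ is of TST type if the only linear $S:W^*\to W$ with $T_\alpha ST_\beta+T_\beta ST_\alpha=0$ for all $\alpha,\beta\in A$ is $S=0$. Invariants are for $\mathrm{ad}_x(a\wedge b)=[x,a]\wedge b+a\wedge[x,b]$. A Lie bialgebra cobracket is a linear $\delta:\mathfrak n\to\Lambda^2\mathfrak n$ satisfying co-Jacobi ($\delta(x_1)\wedge x_2-x_1\wedge\delta(x_2)=0$, Sweedler $\delta(x)=x_1\wedge x_2$) and $\delta[x,y]=[\delta x,y]+[x,\delta y]$. *)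

theory Defs
  imports Main "HOL-Library.Product_Lexorder"
begin

text \<open>Vertices are e_0,...,e_{n-1} (naturally ordered); an edge joining e_i, e_j with i<j
  is the pair (i,j), oriented from e_i to e_j.
  Basis of n(G): Vx i (vertices) and Ed alpha (edges).\<close>

datatype gidx = Vx nat | Ed "nat \<times> nat"

definition basis :: "nat \<Rightarrow> (nat \<times> nat) set \<Rightarrow> gidx set" where
  "basis n A = Vx ` {..<n} \<union> Ed ` A"

definition unitv :: "'b \<Rightarrow> 'b \<Rightarrow> 'a::field" where
  "unitv x = (\<lambda>y. if y = x then 1 else 0)"

text \<open>Elements of Lambda^2 as antisymmetric coefficient matrices:
  omega = sum_{p<q} B p q e_p wedge e_q.\<close>
definition wedge :: "('b \<Rightarrow> 'a::field) \<Rightarrow> ('b \<Rightarrow> 'a) \<Rightarrow> 'b \<Rightarrow> 'b \<Rightarrow> 'a" where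
  "wedge a b p q = a p * b q - a q * b p"

text \<open>Elements of Lambda^3 as alternating coefficient 3-tensors.
  w21 B a = B wedge a,  w12 a B = a wedge B.\<close>
definition w21 :: "('b \<Rightarrow> 'b \<Rightarrow> 'a::field) \<Rightarrow> ('b \<Rightarrow> 'a) \<Rightarrow> 'b \<Rightarrow> 'b \<Rightarrow> 'b \<Rightarrow> 'a" where
  "w21 B a p q u = B p q * a u + B q u * a p + B u p * a q"

definition w12 :: "('b \<Rightarrow> 'a::field) \<Rightarrow> ('b \<Rightarrow> 'b \<Rightarrow> 'a) \<Rightarrow> 'b \<Rightarrow> 'b \<Rightarrow> 'b \<Rightarrow> 'a" where
  "w12 a B p q u = a p * B q u + a q * B u p + a u * B p q"

definition is_L2 :: "nat \<Rightarrow> (nat \<times> nat) set \<Rightarrow> (gidx \<Rightarrow> gidx \<Rightarrow> 'a::field) \<Rightarrow> bool" where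
  "is_L2 n A B \<longleftrightarrow> (\<forall>p q. B p q = - B q p) \<and> (\<forall>p q. p \<notin> basis n A \<longrightarrow> B p q = 0)"

definition in_L2z :: "nat \<Rightarrow> (nat \<times> nat) set \<Rightarrow> (gidx \<Rightarrow> gidx \<Rightarrow> 'a::field) \<Rightarrow> bool" where
  "in_L2z n A B \<longleftrightarrow> is_L2 n A B \<and> (\<forall>i q. B (Vx i) q = 0)"

definition in_WZ_L2z :: "nat \<Rightarrow> (nat \<times> nat) set \<Rightarrow> (gidx \<Rightarrow> gidx \<Rightarrow> 'a::field) \<Rightarrow> bool" where
  "in_WZ_L2z n A B \<longleftrightarrow> is_L2 n A B \<and> (\<forall>i j. B (Vx i) (Vx j) = 0)"

definition br :: "(nat \<times> nat) set \<Rightarrow> (gidx \<Rightarrow> 'a::field) \<Rightarrow> (gidx \<Rightarrow> 'a) \<Rightarrow> gidx \<Rightarrow> 'a" where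
  "br A x y p = (case p of Vx _ \<Rightarrow> 0
     | Ed \<gamma> \<Rightarrow> (if \<gamma> \<in> A then x (Vx (fst \<gamma>)) * y (Vx (snd \<gamma>)) - x (Vx (snd \<gamma>)) * y (Vx (fst \<gamma>)) else 0))"

text \<open>ad_x acting on Lambda^2 n: ad_x(a wedge b) = [x,a] wedge b + a wedge [x,b].\<close>
definition adL2 :: "nat \<Rightarrow> (nat \<times> nat) set \<Rightarrow> (gidx \<Rightarrow> 'a::field) \<Rightarrow> (gidx \<Rightarrow> gidx \<Rightarrow> 'a) \<Rightarrow> gidx \<Rightarrow> gidx \<Rightarrow> 'a" where
  "adL2 n A x B p q = (\<Sum>r\<in>basis n A. br A x (unitv r) p * B r q + B p r * br A x (unitv r) q)"

definition invariant :: "nat \<Rightarrow> (nat \<times> nat) set \<Rightarrow> (gidx \<Rightarrow> gidx \<Rightarrow> 'a::field) \<Rightarrow> bool" where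
  "invariant n A B \<longleftrightarrow> (\<forall>x. \<forall>p q. adL2 n A x B p q = 0)"

text \<open>T_gamma(x)(y) = gamma-coefficient of [x,y], for x,y in W (coordinates nat => 'a).\<close>
definition Tf :: "(nat \<times> nat) set \<Rightarrow> nat \<times> nat \<Rightarrow> (nat \<Rightarrow> 'a::field) \<Rightarrow> (nat \<Rightarrow> 'a) \<Rightarrow> 'a" where
  "Tf A \<gamma> x y = (if \<gamma> \<in> A then x (fst \<gamma>) * y (snd \<gamma>) - x (snd \<gamma>) * y (fst \<gamma>) else 0)"

text \<open>T_gamma(x) as an element of W^* (coordinates in the dual basis).\<close>
definition Tdual :: "(nat \<times> nat) set \<Rightarrow> nat \<times> nat \<Rightarrow> (nat \<Rightarrow> 'a::field) \<Rightarrow> nat \<Rightarrow> 'a" where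
  "Tdual A \<gamma> x = (\<lambda>j. Tf A \<gamma> x (unitv j))"

definition mapp :: "nat \<Rightarrow> (nat \<Rightarrow> nat \<Rightarrow> 'a::field) \<Rightarrow> (nat \<Rightarrow> 'a) \<Rightarrow> nat \<Rightarrow> 'a" where
  "mapp n M x = (\<lambda>r. \<Sum>c<n. M r c * x c)"

definition mmul :: "nat \<Rightarrow> (nat \<Rightarrow> nat \<Rightarrow> 'a::field) \<Rightarrow> (nat \<Rightarrow> nat \<Rightarrow> 'a) \<Rightarrow> nat \<Rightarrow> nat \<Rightarrow> 'a" where
  "mmul n M N r c = (\<Sum>k<n. M r k * N k c)"

text \<open>TST type: the only linear S : W^* -> W with T_a S T_b + T_b S T_a = 0 for all a,b is S = 0.\<close>
definition tst_type :: "'a::field itself \<Rightarrow> nat \<Rightarrow> (nat \<times> nat) set \<Rightarrow> bool" where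
  "tst_type _ n A \<longleftrightarrow> (\<forall>S :: nat \<Rightarrow> nat \<Rightarrow> 'a.
     (\<forall>\<alpha>\<in>A. \<forall>\<beta>\<in>A. \<forall>v w. Tf A \<alpha> (mapp n S (Tdual A \<beta> v)) w + Tf A \<beta> (mapp n S (Tdual A \<alpha> v)) w = 0)
     \<longrightarrow> (\<forall>k<n. \<forall>j<n. S k j = 0))"

text \<open>Co-Jacobi for a linear map given on a basis X: for every x with
  delta x = sum_{r<s} c_rs e_r wedge e_s, sum_{r<s} c_rs (delta(e_r) wedge e_s - e_r wedge delta(e_s)) = 0.
  Since the summand is symmetric in (r,s) and vanishes for r = s, this is written
  as the full double sum (twice the ordered sum; char 0).\<close>
definition cojac :: "'b set \<Rightarrow> ('b \<Rightarrow> 'b \<Rightarrow> 'b \<Rightarrow> 'a::field) \<Rightarrow> bool" where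
  "cojac X \<delta> \<longleftrightarrow> (\<forall>x\<in>X. \<forall>p\<in>X. \<forall>q\<in>X. \<forall>u\<in>X.
     (\<Sum>r\<in>X. \<Sum>s\<in>X. \<delta> x r s * (w21 (\<delta> r) (unitv s) p q u - w12 (unitv r) (\<delta> s) p q u)) = 0)"

text \<open>Lie bialgebra cobracket on n(G), given by its values delta(b) on basis elements b.\<close>
definition cobracket :: "nat \<Rightarrow> (nat \<times> nat) set \<Rightarrow> (gidx \<Rightarrow> gidx \<Rightarrow> gidx \<Rightarrow> 'a::field) \<Rightarrow> bool" where
  "cobracket n A \<delta> \<longleftrightarrow>
     (\<forall>x\<in>basis n A. is_L2 n A (\<delta> x)) \<and>
     cojac (basis n A) \<delta> \<and>
     (\<forall>x\<in>basis n A. \<forall>y\<in>basis n A. \<forall>p q.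
        (\<Sum>r\<in>basis n A. br A (unitv x) (unitv y) r * \<delta> r p q)
          = adL2 n A (unitv x) (\<delta> y) p q - adL2 n A (unitv y) (\<delta> x) p q)"

definition wvec :: "nat \<Rightarrow> (nat \<Rightarrow> 'a::field) \<Rightarrow> gidx \<Rightarrow> 'a" where
  "wvec n v p = (case p of Vx i \<Rightarrow> if i < n then v i else 0 | Ed _ \<Rightarrow> 0)"

definition zmat :: "(nat \<times> nat \<Rightarrow> nat \<times> nat \<Rightarrow> 'a::field) \<Rightarrow> gidx \<Rightarrow> gidx \<Rightarrow> 'a" where
  "zmat C p q = (case (p, q) of (Ed \<alpha>, Ed \<beta>) \<Rightarrow> C \<alpha> \<beta> | _ \<Rightarrow> 0)"

definition phiv :: "nat \<Rightarrow> (nat \<Rightarrow> nat \<times> nat \<Rightarrow> nat \<times> nat \<Rightarrow> 'a::field) \<Rightarrow> (nat \<Rightarrow> 'a) \<Rightarrow> nat \<times> nat \<Rightarrow> nat \<times> nat \<Rightarrow> 'a" where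
  "phiv n \<phi> w = (\<lambda>\<alpha> \<beta>. \<Sum>i<n. w i * \<phi> i \<alpha> \<beta>)"

end

theory Submission
  imports Defs
begin

text \<open>Every vertex has two neighbours. Hence each coefficient of a form in \<open>\<Lambda>\<^sup>2 \<frak>n\<close>
  that involves a vertex \<open>e\<^sub>m\<close> appears isolated in \<open>ad(e\<^sub>i)\<close> of the form for a suitable
  neighbour \<open>i\<close> of \<open>m\<close>, except when \<open>m\<close> closes a triangle, where the three relations form a
  cyclic system with only the trivial solution in characteristic zero; so the invariants are
  \<open>\<Lambda>\<^sup>2 \<frak>z\<close>, and the same choice of neighbours isolates each entry of \<open>S\<close> in the TST
  identity. For a cobracket \<open>\<delta>\<close>, the cocycle condition for the central \<open>\<frak>z\<close> makes each
  \<open>\<delta>(\<gamma>)\<close> invariant, and on pairs of vertices it kills the \<open>W \<and> W\<close> part of \<open>\<delta>(e\<^sub>i)\<close>.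
  The four relations are the components of co-Jacobi and of the cocycle condition on basis
  elements, extended to all of \<open>W\<close> by linearity.\<close>

lemma sum_mult_unitv:
  "finite X \<Longrightarrow> (\<Sum>s\<in>X. f s * unitv s u) = (if u \<in> X then f u else 0)"
  by (simp add: unitv_def if_distrib[of "(*) (f _)"] cong: if_cong)

lemma sum_lessThan_mult_unitv:
  "(\<Sum>c<(n::nat). f c * unitv j c) = (if j < n then f j else 0)"
  by (simp add: unitv_def if_distrib[of "(*) (f _)"] cong: if_cong)

lemma mapp_unitv: "j < n \<Longrightarrow> mapp n M (unitv j) = (\<lambda>r. M r j)"
  by (simp add: mapp_def sum_lessThan_mult_unitv)

lemma phiv_unitv: "i < n \<Longrightarrow> phiv n \<phi> (unitv i) a b = \<phi> i a b"
  by (simp add: phiv_def mult.commute[of "unitv i _"] sum_lessThan_mult_unitv)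

lemma w12_eq_w21: "w12 a B p q u = w21 B a p q u"
  by (simp add: w12_def w21_def algebra_simps)

lemma eq_neg_self_imp_zero: "(z :: 'a::field_char_0) = - z \<Longrightarrow> z = 0"
  by (simp add: eq_neg_iff_add_eq_0)

section \<open>Graphs of minimum degree two\<close>

definition uedge :: "nat \<Rightarrow> nat \<Rightarrow> nat \<times> nat" where
  "uedge u v = (min u v, max u v)"

definition esign :: "nat \<Rightarrow> nat \<Rightarrow> 'a::field" where
  "esign u v = (if u < v then 1 else -1)"

lemma uedge_commute: "uedge u v = uedge v u"
  by (simp add: uedge_def min.commute max.commute)

lemma esign_nonzero [simp]: "esign u v \<noteq> 0"
  by (simp add: esign_def)

lemma esign_commute: "u \<noteq> v \<Longrightarrow> esign v u = - esign u v"
  by (simp add: esign_def)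

lemma Tf_uedge:
  "u \<noteq> v \<Longrightarrow> uedge u v \<in> A \<Longrightarrow> Tf A (uedge u v) x y = esign u v * (x u * y v - x v * y u)"
  by (cases "u < v") (auto simp: Tf_def uedge_def esign_def min_def max_def algebra_simps)

lemma Tf_uedge_unitv:
  "u \<noteq> v \<Longrightarrow> uedge u v \<in> A \<Longrightarrow> Tf A (uedge u v) (unitv u) y = esign u v * y v"
  by (simp add: Tf_uedge unitv_def)

lemma Tf_unitv_off_edge: "w \<noteq> fst \<gamma> \<Longrightarrow> w \<noteq> snd \<gamma> \<Longrightarrow> Tf A \<gamma> (unitv w) y = 0"
  by (simp add: Tf_def unitv_def)

lemma Tf_not_edge [simp]: "\<gamma> \<notin> A \<Longrightarrow> Tf A \<gamma> x y = 0"
  by (simp add: Tf_def)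

lemma Tf_antisym: "Tf A \<gamma> x y = - Tf A \<gamma> y x"
  by (simp add: Tf_def algebra_simps)

locale min_degree_two_graph =
  fixes n :: nat and A :: "(nat \<times> nat) set"
  assumes simple: "A \<subseteq> {(i, j). i < j \<and> j < n}"
    and deg: "\<forall>e<n. 2 \<le> card {\<alpha>\<in>A. fst \<alpha> = e \<or> snd \<alpha> = e}"
begin

lemma finite_edges: "finite A"
  by (rule finite_subset[of _ "{..<n} \<times> {..<n}"]) (use simple in auto)

lemma edge_endpoints: "\<gamma> \<in> A \<Longrightarrow> fst \<gamma> < snd \<gamma> \<and> snd \<gamma> < n"
  using simple by auto

lemma edge_eq_uedge: "\<gamma> \<in> A \<Longrightarrow> \<gamma> = uedge (fst \<gamma>) (snd \<gamma>)"
  using edge_endpoints[of \<gamma>] by (simp add: uedge_def)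

lemma uedge_in_edges_imp: "uedge u v \<in> A \<Longrightarrow> u \<noteq> v \<and> u < n \<and> v < n"
  using edge_endpoints[of "uedge u v"] by (auto simp: uedge_def)

lemma incident_edges_subset:
  "{\<alpha>\<in>A. fst \<alpha> = e \<or> snd \<alpha> = e} \<subseteq> uedge e ` {i. i \<noteq> e \<and> uedge e i \<in> A}"
proof
  fix \<alpha> assume \<alpha>: "\<alpha> \<in> {\<alpha>\<in>A. fst \<alpha> = e \<or> snd \<alpha> = e}"
  obtain a b where ab: "\<alpha> = (a, b)" by force
  with \<alpha> have edge: "(a, b) \<in> A" "a < b" and "a = e \<or> b = e"
    using edge_endpoints by force+
  then show "\<alpha> \<in> uedge e ` {i. i \<noteq> e \<and> uedge e i \<in> A}"
  proof (cases "a = e")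
    case True
    with edge show ?thesis unfolding ab by (intro image_eqI[of _ _ b]) (auto simp: uedge_def)
  next
    case False
    with edge \<open>a = e \<or> b = e\<close> show ?thesis unfolding ab
      by (intro image_eqI[of _ _ a]) (auto simp: uedge_def)
  qed
qed

lemma two_le_card_neighbours: "e < n \<Longrightarrow> 2 \<le> card {i. i \<noteq> e \<and> uedge e i \<in> A}"
proof -
  assume e: "e < n"
  have fin: "finite {i. i \<noteq> e \<and> uedge e i \<in> A}"
    by (rule finite_subset[of _ "{..<n}"]) (auto dest: uedge_in_edges_imp)
  have "2 \<le> card {\<alpha>\<in>A. fst \<alpha> = e \<or> snd \<alpha> = e}"
    using deg e by blast
  also have "\<dots> \<le> card (uedge e ` {i. i \<noteq> e \<and> uedge e i \<in> A})"
    using fin by (intro card_mono incident_edges_subset) simp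
  also have "\<dots> \<le> card {i. i \<noteq> e \<and> uedge e i \<in> A}"
    by (rule card_image_le[OF fin])
  finally show ?thesis .
qed

lemma exists_neighbour_avoiding: "e < n \<Longrightarrow> \<exists>i. i \<noteq> z \<and> i \<noteq> e \<and> uedge e i \<in> A"
proof (rule ccontr)
  assume "e < n" and "\<nexists>i. i \<noteq> z \<and> i \<noteq> e \<and> uedge e i \<in> A"
  then have "2 \<le> card {i. i \<noteq> e \<and> uedge e i \<in> A}" and "{i. i \<noteq> e \<and> uedge e i \<in> A} \<subseteq> {z}"
    using two_le_card_neighbours by blast+
  then show False
    using card_mono[of "{z}" "{i. i \<noteq> e \<and> uedge e i \<in> A}"] by simp
qed

lemma exists_two_neighbours:
  "e < n \<Longrightarrow> \<exists>i j. i \<noteq> j \<and> i \<noteq> e \<and> j \<noteq> e \<and> uedge e i \<in> A \<and> uedge e j \<in> A"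
proof -
  assume e: "e < n"
  obtain i where "i \<noteq> e" "uedge e i \<in> A" using exists_neighbour_avoiding[OF e, of e] by blast
  moreover obtain j where "j \<noteq> i" "j \<noteq> e" "uedge e j \<in> A"
    using exists_neighbour_avoiding[OF e, of i] by blast
  ultimately show ?thesis by blast
qed

lemma finite_basis: "finite (basis n A)"
  using finite_edges by (simp add: basis_def)

lemma Vx_in_basis [simp]: "Vx m \<in> basis n A \<longleftrightarrow> m < n"
  by (auto simp: basis_def)

lemma Ed_in_basis [simp]: "Ed \<gamma> \<in> basis n A \<longleftrightarrow> \<gamma> \<in> A"
  by (auto simp: basis_def)

lemma sum_basis: "sum f (basis n A) = (\<Sum>k<n. f (Vx k)) + (\<Sum>\<gamma>\<in>A. f (Ed \<gamma>))"
proof -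
  have "sum f (basis n A) = sum f (Vx ` {..<n}) + sum f (Ed ` A)"
    unfolding basis_def by (rule sum.union_disjoint) (use finite_edges in auto)
  also have "\<dots> = (\<Sum>k<n. f (Vx k)) + (\<Sum>\<gamma>\<in>A. f (Ed \<gamma>))"
    by (simp add: sum.reindex inj_on_def)
  finally show ?thesis .
qed

end

lemma br_Vx [simp]: "br A x y (Vx i) = 0"
  by (simp add: br_def)

lemma br_unitv_Ed_left [simp]: "br A (unitv (Ed \<gamma>)) y p = 0"
  by (simp add: br_def unitv_def split: gidx.split)

lemma br_unitv_Ed_right [simp]: "br A x (unitv (Ed \<gamma>)) p = 0"
  by (simp add: br_def unitv_def split: gidx.split)

lemma br_unitv_Vx: "br A (unitv (Vx i)) (unitv (Vx k)) (Ed \<gamma>) = Tf A \<gamma> (unitv i) (unitv k)"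
  by (simp add: br_def Tf_def unitv_def)

lemma adL2_unitv_Ed: "adL2 n A (unitv (Ed \<gamma>)) B p q = 0"
  by (simp add: adL2_def)

context min_degree_two_graph
begin

lemma sum_br_unitv_Vx:
  "(\<Sum>k<n. br A (unitv (Vx i)) (unitv (Vx k)) (Ed \<gamma>) * h k) = Tf A \<gamma> (unitv i) h"
proof (cases "\<gamma> \<in> A")
  case True
  then have "fst \<gamma> < n" "snd \<gamma> < n"
    using edge_endpoints by fastforce+
  moreover have "(\<Sum>k<n. br A (unitv (Vx i)) (unitv (Vx k)) (Ed \<gamma>) * h k)
     = (\<Sum>k<n. (if k = snd \<gamma> then (if fst \<gamma> = i then h k else 0) else 0)
               - (if k = fst \<gamma> then (if snd \<gamma> = i then h k else 0) else 0))"
    unfolding br_unitv_Vx by (rule sum.cong) (auto simp: Tf_def unitv_def True)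
  ultimately show ?thesis
    using True by (simp add: sum_subtractf Tf_def unitv_def)
qed (simp add: br_unitv_Vx)

lemma adL2_unitv_Vx:
  "adL2 n A (unitv (Vx i)) B p q
     = (\<Sum>k<n. br A (unitv (Vx i)) (unitv (Vx k)) p * B (Vx k) q)
     + (\<Sum>k<n. B p (Vx k) * br A (unitv (Vx i)) (unitv (Vx k)) q)"
  unfolding adL2_def sum_basis by (simp add: sum.distrib)

lemma adL2_unitv_Vx_Ed_Ed:
  "adL2 n A (unitv (Vx i)) B (Ed \<alpha>) (Ed \<beta>)
     = Tf A \<alpha> (unitv i) (\<lambda>k. B (Vx k) (Ed \<beta>)) + Tf A \<beta> (unitv i) (\<lambda>k. B (Ed \<alpha>) (Vx k))"
  unfolding adL2_unitv_Vx sum_br_unitv_Vx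
  using sum_br_unitv_Vx[of i \<beta> "\<lambda>k. B (Ed \<alpha>) (Vx k)"] by (simp add: mult.commute)

lemma adL2_unitv_Vx_Ed_Vx:
  "adL2 n A (unitv (Vx i)) B (Ed \<alpha>) (Vx t) = Tf A \<alpha> (unitv i) (\<lambda>k. B (Vx k) (Vx t))"
  unfolding adL2_unitv_Vx sum_br_unitv_Vx by simp

end

section \<open>Invariants in \<open>\<Lambda>\<^sup>2 \<frak>n\<close>\<close>

lemma in_L2z_imp_invariant: "in_L2z n A B \<Longrightarrow> invariant n A B"
proof -
  assume B: "in_L2z n A B"
  then have left: "B (Vx i) q = 0" and right: "B p (Vx i) = 0" for i p q
    unfolding in_L2z_def is_L2_def by (metis minus_zero)+
  show ?thesis
    unfolding invariant_def adL2_def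
  proof (intro allI sum.neutral ballI)
    fix x p q r
    show "br A x (unitv r) p * B r q + B p r * br A x (unitv r) q = 0"
      by (cases r) (simp_all add: left right)
  qed
qed

lemma cyclic_relations_imp_zero:
  fixes a c d P Q R :: "'k::field_char_0"
  assumes "a \<noteq> 0" "c \<noteq> 0" "- a * P + d * Q = 0" "- c * P + d * R = 0" "a * R + c * Q = 0"
  shows "P = 0"
proof -
  have dQ: "d * Q = a * P" and dR: "d * R = c * P"
    using assms(3,4) by (simp_all add: algebra_simps)
  have "(a * c) * (2 * P) = a * (d * R) + c * (d * Q)"
    unfolding dQ dR by (simp add: algebra_simps)
  also have "\<dots> = d * (a * R + c * Q)"
    by (simp add: algebra_simps)
  finally show ?thesis
    using assms(1,2,5) by simp
qed

text \<open>A form that is invariant under the vertices only; invariance under the edges is automatic.\<close>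

locale W_invariant_form = min_degree_two_graph +
  fixes B :: "gidx \<Rightarrow> gidx \<Rightarrow> 'k::field_char_0"
  assumes L2: "is_L2 n A B"
    and W_invariant: "\<And>i p q. i < n \<Longrightarrow> adL2 n A (unitv (Vx i)) B p q = 0"
begin

lemma antisym: "B p q = - B q p"
  using L2 unfolding is_L2_def by blast

lemma outside_basis_left: "p \<notin> basis n A \<Longrightarrow> B p q = 0"
  using L2 unfolding is_L2_def by blast

lemma outside_basis_right: "q \<notin> basis n A \<Longrightarrow> B p q = 0"
  using antisym outside_basis_left by (metis minus_zero)

lemma invariance_at_edge:
  assumes "uedge i m \<in> A" "i \<noteq> m"
  shows "esign i m * B (Vx m) (Ed \<beta>) + Tf A \<beta> (unitv i) (\<lambda>k. B (Ed (uedge i m)) (Vx k)) = 0"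
proof -
  have "i < n" using uedge_in_edges_imp assms by blast
  then have "adL2 n A (unitv (Vx i)) B (Ed (uedge i m)) (Ed \<beta>) = 0" by (rule W_invariant)
  then show ?thesis
    unfolding adL2_unitv_Vx_Ed_Ed
    using Tf_uedge_unitv[OF assms(2,1), of "\<lambda>k. B (Vx k) (Ed \<beta>)"] by simp
qed

lemma vertex_vertex_coeff_zero: "m < n \<Longrightarrow> B (Vx m) (Vx t) = 0"
proof -
  assume "m < n"
  then obtain i where i: "i \<noteq> m" "uedge i m \<in> A"
    using exists_neighbour_avoiding[of m m] uedge_commute by metis
  then have "i < n" using uedge_in_edges_imp by blast
  then have "adL2 n A (unitv (Vx i)) B (Ed (uedge i m)) (Vx t) = 0" by (rule W_invariant)
  then show ?thesis
    unfolding adL2_unitv_Vx_Ed_Vx using Tf_uedge_unitv[OF i, of "\<lambda>k. B (Vx k) (Vx t)"] by simp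
qed

lemma vertex_edge_coeff_zero_far:
  assumes "uedge i m \<in> A" "i \<noteq> m" "i \<noteq> fst \<beta>" "i \<noteq> snd \<beta>"
  shows "B (Vx m) (Ed \<beta>) = 0"
  using invariance_at_edge[OF assms(1,2), of \<beta>] Tf_unitv_off_edge[OF assms(3,4), of A "\<lambda>k. B (Ed (uedge i m)) (Vx k)"]
  by simp

text \<open>When \<open>m\<close> is adjacent to both ends of \<open>xy\<close>, the invariance relations at the three
  vertices of the triangle only determine the coefficient up to a cyclic system, which
  forces it to vanish in characteristic zero.\<close>

lemma vertex_edge_coeff_zero_triangle:
  assumes dist: "m \<noteq> x" "m \<noteq> y" "x \<noteq> y"
    and edges: "uedge m x \<in> A" "uedge m y \<in> A" "uedge x y \<in> A"
  shows "B (Vx m) (Ed (uedge x y)) = 0"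
proof -
  define P where "P = B (Vx m) (Ed (uedge x y))"
  define Q where "Q = B (Ed (uedge m x)) (Vx y)"
  define R where "R = B (Vx x) (Ed (uedge m y))"
  have "esign x m * P + esign x y * Q = 0"
    using invariance_at_edge[of x m "uedge x y"] edges dist Tf_uedge_unitv[of x y]
    unfolding P_def Q_def by (metis uedge_commute)
  then have EQx: "- esign m x * P + esign x y * Q = 0"
    by (simp add: esign_commute[OF dist(1)])
  have "B (Ed (uedge y m)) (Vx x) = - R"
    unfolding R_def using antisym uedge_commute by metis
  then have "esign y m * P + esign y x * (- R) = 0"
    using invariance_at_edge[of y m "uedge x y"] edges dist Tf_uedge_unitv[of y x]
    unfolding P_def by (metis uedge_commute)
  then have EQy: "- esign m y * P + esign x y * R = 0"
    by (simp add: esign_commute[OF dist(2)] esign_commute[OF dist(3)])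
  have EQm: "esign m x * R + esign m y * Q = 0"
    using invariance_at_edge[of m x "uedge m y"] edges dist Tf_uedge_unitv[of m y]
    unfolding R_def Q_def by (metis uedge_commute)
  show ?thesis
    using cyclic_relations_imp_zero[OF esign_nonzero esign_nonzero EQx EQy EQm] by (simp add: P_def)
qed

lemma vertex_edge_coeff_zero:
  assumes m: "m < n" and \<beta>: "\<beta> \<in> A"
  shows "B (Vx m) (Ed \<beta>) = 0"
proof -
  obtain i j where ij: "i \<noteq> j" "i \<noteq> m" "j \<noteq> m" "uedge m i \<in> A" "uedge m j \<in> A"
    using exists_two_neighbours[OF m] by blast
  have \<beta>_eq: "\<beta> = uedge (fst \<beta>) (snd \<beta>)" "fst \<beta> \<noteq> snd \<beta>"
    using edge_eq_uedge edge_endpoints \<beta> by fastforce+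
  show ?thesis
  proof (cases "i \<in> {fst \<beta>, snd \<beta>} \<and> j \<in> {fst \<beta>, snd \<beta>}")
    case True
    with ij \<beta>_eq have "{i, j} = {fst \<beta>, snd \<beta>}" "m \<notin> {fst \<beta>, snd \<beta>}" by auto
    with ij \<beta> \<beta>_eq show ?thesis
      using vertex_edge_coeff_zero_triangle[of m "fst \<beta>" "snd \<beta>"] by (auto simp: doubleton_eq_iff)
  next
    case False
    with ij show ?thesis
      using vertex_edge_coeff_zero_far[of i m \<beta>] vertex_edge_coeff_zero_far[of j m \<beta>]
      by (auto simp: uedge_commute)
  qed
qed

lemma in_L2z: "in_L2z n A B"
  unfolding in_L2z_def
proof (intro conjI allI L2)
  fix i q
  show "B (Vx i) q = 0"
  proof (cases "i < n")
    case True
    show ?thesis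
    proof (cases q)
      case (Ed \<beta>)
      then show ?thesis
        using True vertex_edge_coeff_zero[of i \<beta>] outside_basis_right[of q] by (cases "\<beta> \<in> A") auto
    qed (simp add: True vertex_vertex_coeff_zero)
  qed (simp add: outside_basis_left)
qed

end

context min_degree_two_graph
begin

lemma invariant_iff_in_L2z:
  fixes B :: "gidx \<Rightarrow> gidx \<Rightarrow> 'k::field_char_0"
  assumes "is_L2 n A B"
  shows "invariant n A B \<longleftrightarrow> in_L2z n A B"
proof
  assume "invariant n A B"
  then interpret W_invariant_form n A B
    using assms by unfold_locales (simp_all add: invariant_def)
  show "in_L2z n A B" by (rule in_L2z)
qed (rule in_L2z_imp_invariant)

end

section \<open>TST type\<close>

context min_degree_two_graph
begin

lemma Tdual_uedge_unitv:
  assumes "u \<noteq> j" "uedge j u \<in> A"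
  shows "Tdual A (uedge j u) (unitv u) = (\<lambda>c. esign u j * unitv j c)"
proof
  fix c
  have "uedge u j \<in> A" using assms(2) by (simp add: uedge_commute)
  with assms(1) have "Tf A (uedge u j) (unitv u) (unitv c) = esign u j * unitv c j"
    by (intro Tf_uedge_unitv) auto
  then show "Tdual A (uedge j u) (unitv u) c = esign u j * unitv j c"
    by (auto simp: Tdual_def uedge_commute unitv_def)
qed

text \<open>Testing the TST identity with \<open>\<alpha> = kw\<close>, \<open>\<beta> = ju\<close> at \<open>(e\<^sub>u, e\<^sub>w)\<close>, where \<open>u\<close> is a
  neighbour of \<open>j\<close> and \<open>w\<close> a neighbour of \<open>k\<close> different from \<open>u\<close>, isolates \<open>S k j\<close>.\<close>

lemma tst_type: "tst_type TYPE('k::field_char_0) n A"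
  unfolding tst_type_def
proof (intro allI impI)
  fix S :: "nat \<Rightarrow> nat \<Rightarrow> 'k" and k j
  assume H: "\<forall>\<alpha>\<in>A. \<forall>\<beta>\<in>A. \<forall>v w. Tf A \<alpha> (mapp n S (Tdual A \<beta> v)) w + Tf A \<beta> (mapp n S (Tdual A \<alpha> v)) w = 0"
    and k: "k < n" and j: "j < n"
  obtain u where u: "u \<noteq> k" "u \<noteq> j" "uedge j u \<in> A"
    using exists_neighbour_avoiding[OF j, of k] by blast
  obtain w where w: "w \<noteq> u" "w \<noteq> k" "uedge k w \<in> A"
    using exists_neighbour_avoiding[OF k, of u] by blast
  have image_j: "mapp n S (Tdual A (uedge j u) (unitv u)) = (\<lambda>r. esign u j * S r j)"
    using j by (simp add: Tdual_uedge_unitv u mapp_def mult.left_commute[of "S _ _"]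
        sum_lessThan_mult_unitv flip: sum_distrib_left)
  have "u \<noteq> fst (uedge k w)" "u \<noteq> snd (uedge k w)"
    using w u by (simp_all add: uedge_def min_def max_def)
  then have dual_k: "Tdual A (uedge k w) (unitv u) = (\<lambda>c. 0)"
    unfolding Tdual_def by (intro ext Tf_unitv_off_edge)
  have "Tf A (uedge k w) (mapp n S (Tdual A (uedge j u) (unitv u))) (unitv w)
      + Tf A (uedge j u) (mapp n S (Tdual A (uedge k w) (unitv u))) (unitv w) = 0"
    using H w(3) u(3) by blast
  moreover have "Tf A (uedge j u) (mapp n S (\<lambda>c. 0)) (unitv w) = 0"
    by (simp add: mapp_def Tf_def)
  ultimately have "esign k w * (esign u j * S k j) = 0"
    unfolding image_j dual_k using w by (simp add: Tf_uedge unitv_def)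
  then show "S k j = 0" by simp
qed

end

definition coord_linear :: "nat \<Rightarrow> ((nat \<Rightarrow> 'a::field) \<Rightarrow> 'a) \<Rightarrow> bool" where
  "coord_linear n F \<longleftrightarrow> (\<forall>x. F x = (\<Sum>i<n. x i * F (unitv i)))"

lemma coord_linearD: "coord_linear n F \<Longrightarrow> F x = (\<Sum>i<n. x i * F (unitv i))"
  unfolding coord_linear_def by blast

lemma coord_linear_eq_zero:
  assumes "coord_linear n F" "\<And>i. i < n \<Longrightarrow> F (unitv i) = 0"
  shows "F x = 0"
  using coord_linearD[OF assms(1), of x] assms(2) by simp

lemma coord_linear_add:
  assumes "coord_linear n F" "coord_linear n G"
  shows "coord_linear n (\<lambda>x. F x + G x)"
  unfolding coord_linear_def
proof
  fix x show "F x + G x = (\<Sum>i<n. x i * (F (unitv i) + G (unitv i)))"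
    using coord_linearD[OF assms(1), of x] coord_linearD[OF assms(2), of x]
    by (simp add: distrib_left sum.distrib)
qed

lemma coord_linear_diff:
  assumes "coord_linear n F" "coord_linear n G"
  shows "coord_linear n (\<lambda>x. F x - G x)"
  unfolding coord_linear_def
proof
  fix x show "F x - G x = (\<Sum>i<n. x i * (F (unitv i) - G (unitv i)))"
    using coord_linearD[OF assms(1), of x] coord_linearD[OF assms(2), of x]
    by (simp add: right_diff_distrib sum_subtractf)
qed

lemma coord_linear_mult_const:
  assumes "coord_linear n F"
  shows "coord_linear n (\<lambda>x. F x * c)"
  unfolding coord_linear_def
proof
  fix x show "F x * c = (\<Sum>i<n. x i * (F (unitv i) * c))"
    using coord_linearD[OF assms, of x] by (simp add: sum_distrib_right mult.assoc)
qed

lemma coord_linear_if: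
  assumes "coord_linear n F"
  shows "coord_linear n (\<lambda>x. if P then F x else 0)"
  using assms by (cases P) (simp_all add: coord_linear_def[of n "\<lambda>x. 0"])

lemma coord_linear_sum:
  assumes "\<And>g. g \<in> S \<Longrightarrow> coord_linear n (F g)"
  shows "coord_linear n (\<lambda>x. \<Sum>g\<in>S. F g x)"
  unfolding coord_linear_def
proof
  fix x
  have "(\<Sum>g\<in>S. F g x) = (\<Sum>g\<in>S. \<Sum>i<n. x i * F g (unitv i))"
    using assms by (intro sum.cong refl coord_linearD)
  also have "\<dots> = (\<Sum>i<n. x i * (\<Sum>g\<in>S. F g (unitv i)))"
    by (subst sum.swap) (simp add: sum_distrib_left)
  finally show "(\<Sum>g\<in>S. F g x) = (\<Sum>i<n. x i * (\<Sum>g\<in>S. F g (unitv i)))" .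
qed

lemma coord_linear_comp:
  assumes F: "coord_linear n F" and L: "\<And>r. coord_linear n (\<lambda>x. L x r)"
  shows "coord_linear n (\<lambda>x. F (L x))"
  unfolding coord_linear_def
proof
  fix x
  have "F (L x) = (\<Sum>r<n. L x r * F (unitv r))"
    by (rule coord_linearD[OF F])
  also have "\<dots> = (\<Sum>r<n. (\<Sum>i<n. x i * L (unitv i) r) * F (unitv r))"
    by (rule sum.cong[OF refl]) (subst coord_linearD[OF L], rule refl)
  also have "\<dots> = (\<Sum>r<n. \<Sum>i<n. x i * (L (unitv i) r * F (unitv r)))"
    by (simp add: sum_distrib_right mult.assoc)
  also have "\<dots> = (\<Sum>i<n. x i * (\<Sum>r<n. L (unitv i) r * F (unitv r)))"
    by (subst sum.swap) (simp add: sum_distrib_left)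
  also have "\<dots> = (\<Sum>i<n. x i * F (L (unitv i)))"
    by (rule sum.cong[OF refl]) (subst (2) coord_linearD[OF F], rule refl)
  finally show "F (L x) = (\<Sum>i<n. x i * F (L (unitv i)))" .
qed

lemma coord_linear_mapp: "coord_linear n (\<lambda>x. mapp n M x r)"
  unfolding coord_linear_def
proof
  fix x
  have "(\<Sum>i<n. x i * mapp n M (unitv i) r) = (\<Sum>i<n. x i * M r i)"
    by (intro sum.cong refl) (simp add: mapp_unitv)
  then show "mapp n M x r = (\<Sum>i<n. x i * mapp n M (unitv i) r)"
    by (simp add: mapp_def mult.commute)
qed

lemma coord_linear_phiv: "coord_linear n (\<lambda>v. phiv n \<phi> v \<alpha> \<beta>)"
  unfolding coord_linear_def
proof
  fix v
  have "(\<Sum>i<n. v i * phiv n \<phi> (unitv i) \<alpha> \<beta>) = (\<Sum>i<n. v i * \<phi> i \<alpha> \<beta>)"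
    by (intro sum.cong refl) (simp add: phiv_unitv)
  then show "phiv n \<phi> v \<alpha> \<beta> = (\<Sum>i<n. v i * phiv n \<phi> (unitv i) \<alpha> \<beta>)"
    by (simp add: phiv_def)
qed

context min_degree_two_graph
begin

lemma coord_linear_Tf_left: "coord_linear n (\<lambda>x. Tf A \<gamma> x y)"
  unfolding coord_linear_def
proof
  fix x
  show "Tf A \<gamma> x y = (\<Sum>i<n. x i * Tf A \<gamma> (unitv i) y)"
  proof (cases "\<gamma> \<in> A")
    case True
    then have "fst \<gamma> < n" "snd \<gamma> < n"
      using edge_endpoints by fastforce+
    with True show ?thesis
      by (simp add: Tf_def unitv_def right_diff_distrib sum_subtractf
          if_distrib[of "\<lambda>t. t * _"] if_distrib[of "(*) (x _)"] cong: if_cong)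
  qed simp
qed

lemma coord_linear_Tf_right: "coord_linear n (\<lambda>y. Tf A \<gamma> x y)"
  unfolding coord_linear_def
proof
  fix y
  have "Tf A \<gamma> x y = - (\<Sum>i<n. y i * Tf A \<gamma> (unitv i) x)"
    using Tf_antisym coord_linearD[OF coord_linear_Tf_left] by metis
  also have "\<dots> = (\<Sum>i<n. y i * Tf A \<gamma> x (unitv i))"
    by (simp add: sum_negf[symmetric] Tf_antisym[of A \<gamma> x])
  finally show "Tf A \<gamma> x y = (\<Sum>i<n. y i * Tf A \<gamma> x (unitv i))" .
qed

lemma coord_linear_Tf_mapp_left: "coord_linear n (\<lambda>x. Tf A \<gamma> (mapp n M x) y)"
  by (rule coord_linear_comp[OF coord_linear_Tf_left coord_linear_mapp])

lemma coord_linear_Tf_mapp_right: "coord_linear n (\<lambda>y. Tf A \<gamma> x (mapp n M y))"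
  by (rule coord_linear_comp[OF coord_linear_Tf_right coord_linear_mapp])

end

section \<open>Lie bialgebra cobrackets\<close>

lemma cojac_sum_eq_cyclic:
  fixes \<delta> :: "'b \<Rightarrow> 'b \<Rightarrow> 'b \<Rightarrow> 'a::field"
  assumes fin: "finite X" and antisym: "\<And>r s. \<delta> x r s = - \<delta> x s r"
    and PQU: "P \<in> X" "Q \<in> X" "U \<in> X"
  shows "(\<Sum>r\<in>X. \<Sum>s\<in>X. \<delta> x r s * (w21 (\<delta> r) (unitv s) P Q U - w12 (unitv r) (\<delta> s) P Q U))
       = 2 * (\<Sum>r\<in>X. \<delta> x r U * \<delta> r P Q + \<delta> x r P * \<delta> r Q U + \<delta> x r Q * \<delta> r U P)"
proof -
  let ?B = "\<delta> x"
  let ?T = "\<lambda>r. ?B r U * \<delta> r P Q + ?B r P * \<delta> r Q U + ?B r Q * \<delta> r U P"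
  have w21_part: "(\<Sum>s\<in>X. ?B r s * w21 (\<delta> r) (unitv s) P Q U) = ?T r" for r
  proof -
    have "(\<Sum>s\<in>X. ?B r s * w21 (\<delta> r) (unitv s) P Q U)
      = (\<Sum>s\<in>X. (if U = s then ?B r s * \<delta> r P Q else 0) + (if P = s then ?B r s * \<delta> r Q U else 0)
                + (if Q = s then ?B r s * \<delta> r U P else 0))"
      by (rule sum.cong) (auto simp: w21_def unitv_def distrib_left)
    then show ?thesis using fin PQU by (simp add: sum.distrib)
  qed
  have w12_part: "(\<Sum>r\<in>X. ?B r s * w12 (unitv r) (\<delta> s) P Q U) = - ?T s" for s
  proof -
    have "(\<Sum>r\<in>X. ?B r s * w12 (unitv r) (\<delta> s) P Q U)
      = (\<Sum>r\<in>X. (if P = r then ?B r s * \<delta> s Q U else 0) + (if Q = r then ?B r s * \<delta> s U P else 0)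
                + (if U = r then ?B r s * \<delta> s P Q else 0))"
      by (rule sum.cong) (auto simp: w12_def unitv_def distrib_left)
    also have "\<dots> = ?B P s * \<delta> s Q U + ?B Q s * \<delta> s U P + ?B U s * \<delta> s P Q"
      using fin PQU by (simp add: sum.distrib)
    also have "\<dots> = - ?T s"
      using antisym[of P s] antisym[of Q s] antisym[of U s] by (simp add: algebra_simps)
    finally show ?thesis .
  qed
  have "(\<Sum>r\<in>X. \<Sum>s\<in>X. ?B r s * (w21 (\<delta> r) (unitv s) P Q U - w12 (unitv r) (\<delta> s) P Q U))
     = (\<Sum>r\<in>X. \<Sum>s\<in>X. ?B r s * w21 (\<delta> r) (unitv s) P Q U)
     - (\<Sum>r\<in>X. \<Sum>s\<in>X. ?B r s * w12 (unitv r) (\<delta> s) P Q U)"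
    by (simp add: right_diff_distrib sum_subtractf)
  also have "(\<Sum>r\<in>X. \<Sum>s\<in>X. ?B r s * w12 (unitv r) (\<delta> s) P Q U)
     = (\<Sum>s\<in>X. \<Sum>r\<in>X. ?B r s * w12 (unitv r) (\<delta> s) P Q U)"
    by (rule sum.swap)
  also have "\<dots> = - (\<Sum>s\<in>X. ?T s)"
    unfolding w12_part by (rule sum_negf)
  also have "(\<Sum>r\<in>X. \<Sum>s\<in>X. ?B r s * w21 (\<delta> r) (unitv s) P Q U) = (\<Sum>r\<in>X. ?T r)"
    by (simp add: w21_part)
  finally show ?thesis by (simp only: diff_minus_eq_add mult_2)
qed

lemma sum_ordered_pairs_antisym:
  fixes \<phi> X :: "'b::linorder \<Rightarrow> 'b \<Rightarrow> 'a::field_char_0"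
  assumes antisym: "\<And>a b. \<phi> a b = - \<phi> b a"
  shows "(\<Sum>a\<in>S. \<Sum>b\<in>S. if a < b then \<phi> a b * (X a b - X b a) else 0)
       = (\<Sum>a\<in>S. \<Sum>b\<in>S. \<phi> a b * X a b)"
proof -
  have diag: "\<phi> a a = 0" for a
    by (rule eq_neg_self_imp_zero) (rule antisym)
  have "(\<Sum>a\<in>S. \<Sum>b\<in>S. if a < b then \<phi> a b * (X a b - X b a) else 0)
      = (\<Sum>a\<in>S. \<Sum>b\<in>S. if a < b then \<phi> a b * X a b else 0)
      - (\<Sum>a\<in>S. \<Sum>b\<in>S. if a < b then \<phi> a b * X b a else 0)"
    by (simp add: sum_subtractf[symmetric] right_diff_distrib if_distrib[of "\<lambda>t. t - _"]
        if_distrib[of "\<lambda>t. _ - t"] cong: if_cong)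
  also have "\<dots> = (\<Sum>a\<in>S. \<Sum>b\<in>S. (if a < b then \<phi> a b * X a b else 0) - (if b < a then \<phi> b a * X a b else 0))"
    by (subst (2) sum.swap) (simp add: sum_subtractf)
  also have "\<dots> = (\<Sum>a\<in>S. \<Sum>b\<in>S. \<phi> a b * X a b)"
  proof (intro sum.cong refl)
    fix a b
    show "(if a < b then \<phi> a b * X a b else 0) - (if b < a then \<phi> b a * X a b else 0) = \<phi> a b * X a b"
      using antisym[of b a] diag[of a] by (cases a b rule: linorder_cases) auto
  qed
  finally show ?thesis .
qed

lemma sum_wedge_unitv:
  assumes "finite S" "a \<in> S" "b \<in> S"
  shows "(\<Sum>g\<in>S. \<Sum>e\<in>S. F g e * wedge (unitv g) (unitv e) a b) = F a b - F b a"
proof -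
  have inner: "(\<Sum>e\<in>S. F g e * wedge (unitv g) (unitv e) a b)
      = (if a = g then F g b else 0) - (if b = g then F g a else 0)" for g
  proof -
    have "(\<Sum>e\<in>S. F g e * wedge (unitv g) (unitv e) a b)
      = (\<Sum>e\<in>S. (if a = g then (if b = e then F g e else 0) else 0)
              - (if b = g then (if a = e then F g e else 0) else 0))"
      by (rule sum.cong) (auto simp: wedge_def unitv_def)
    also have "\<dots> = (if a = g then F g b else 0) - (if b = g then F g a else 0)"
      using assms by (simp add: sum_subtractf)
    finally show ?thesis .
  qed
  show ?thesis unfolding inner using assms by (simp add: sum_subtractf)
qed

definition delta_z :: "(gidx \<Rightarrow> gidx \<Rightarrow> gidx \<Rightarrow> 'k) \<Rightarrow> nat \<times> nat \<Rightarrow> nat \<times> nat \<Rightarrow> nat \<times> nat \<Rightarrow> 'k" where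
  "delta_z \<delta> \<gamma> \<alpha> \<beta> = \<delta> (Ed \<gamma>) (Ed \<alpha>) (Ed \<beta>)"

definition delta_D :: "(gidx \<Rightarrow> gidx \<Rightarrow> gidx \<Rightarrow> 'k) \<Rightarrow> nat \<times> nat \<Rightarrow> nat \<Rightarrow> nat \<Rightarrow> 'k" where
  "delta_D \<delta> \<alpha> r i = \<delta> (Vx i) (Vx r) (Ed \<alpha>)"

definition delta_phi :: "(gidx \<Rightarrow> gidx \<Rightarrow> gidx \<Rightarrow> 'k) \<Rightarrow> nat \<Rightarrow> nat \<times> nat \<Rightarrow> nat \<times> nat \<Rightarrow> 'k" where
  "delta_phi \<delta> i \<alpha> \<beta> = \<delta> (Vx i) (Ed \<alpha>) (Ed \<beta>)"

locale graph_cobracket = min_degree_two_graph +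
  fixes \<delta> :: "gidx \<Rightarrow> gidx \<Rightarrow> gidx \<Rightarrow> 'k::field_char_0"
  assumes cobracket: "cobracket n A \<delta>"
begin

lemma delta_L2: "x \<in> basis n A \<Longrightarrow> is_L2 n A (\<delta> x)"
  using cobracket unfolding cobracket_def by blast

lemma delta_antisym: "x \<in> basis n A \<Longrightarrow> \<delta> x p q = - \<delta> x q p"
  using delta_L2 unfolding is_L2_def by blast

lemma delta_outside_left: "x \<in> basis n A \<Longrightarrow> p \<notin> basis n A \<Longrightarrow> \<delta> x p q = 0"
  using delta_L2 unfolding is_L2_def by blast

lemma delta_outside_right: "x \<in> basis n A \<Longrightarrow> q \<notin> basis n A \<Longrightarrow> \<delta> x p q = 0"
  using delta_antisym delta_outside_left by (metis minus_zero)

lemma cocycle: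
  "x \<in> basis n A \<Longrightarrow> y \<in> basis n A \<Longrightarrow>
    (\<Sum>r\<in>basis n A. br A (unitv x) (unitv y) r * \<delta> r p q)
      = adL2 n A (unitv x) (\<delta> y) p q - adL2 n A (unitv y) (\<delta> x) p q"
  using cobracket unfolding cobracket_def by blast

lemma cojac_cyclic:
  assumes "x \<in> basis n A" "P \<in> basis n A" "Q \<in> basis n A" "U \<in> basis n A"
  shows "(\<Sum>r\<in>basis n A. \<delta> x r U * \<delta> r P Q + \<delta> x r P * \<delta> r Q U + \<delta> x r Q * \<delta> r U P) = 0"
proof -
  have "(\<Sum>r\<in>basis n A. \<Sum>s\<in>basis n A. \<delta> x r s * (w21 (\<delta> r) (unitv s) P Q U - w12 (unitv r) (\<delta> s) P Q U)) = 0"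
    using cobracket assms unfolding cobracket_def cojac_def by blast
  then show ?thesis
    using cojac_sum_eq_cyclic[of "basis n A" \<delta> x P Q U, OF finite_basis delta_antisym[OF assms(1)] assms(2-4)]
    by simp
qed

text \<open>Since \<open>\<frak>z\<close> is central, the cocycle condition makes every \<open>\<delta>(\<gamma>)\<close> \<open>\<frak>n\<close>-invariant.\<close>

lemma edge_delta_in_L2z:
  assumes \<gamma>: "\<gamma> \<in> A"
  shows "in_L2z n A (\<delta> (Ed \<gamma>))"
proof -
  interpret W_invariant_form n A "\<delta> (Ed \<gamma>)"
  proof
    show "is_L2 n A (\<delta> (Ed \<gamma>))" using \<gamma> by (simp add: delta_L2)
    fix i p q assume "i < n"
    then show "adL2 n A (unitv (Vx i)) (\<delta> (Ed \<gamma>)) p q = 0"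
      using cocycle[of "Vx i" "Ed \<gamma>" p q] \<gamma> by (simp add: adL2_unitv_Ed)
  qed
  show ?thesis by (rule in_L2z)
qed

lemma delta_Ed_Vx_left: "\<gamma> \<in> A \<Longrightarrow> \<delta> (Ed \<gamma>) (Vx k) q = 0"
  using edge_delta_in_L2z unfolding in_L2z_def by blast

lemma delta_Ed_Vx_right: "\<gamma> \<in> A \<Longrightarrow> \<delta> (Ed \<gamma>) p (Vx k) = 0"
  using delta_Ed_Vx_left[of \<gamma> k p] delta_antisym[of "Ed \<gamma>" p "Vx k"] by simp

lemma delta_Ed_eq_zmat: "\<gamma> \<in> A \<Longrightarrow> \<delta> (Ed \<gamma>) = zmat (delta_z \<delta> \<gamma>)"
proof (intro ext)
  fix p q assume "\<gamma> \<in> A"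
  then show "\<delta> (Ed \<gamma>) p q = zmat (delta_z \<delta> \<gamma>) p q"
    by (cases p; cases q) (simp_all add: zmat_def delta_z_def delta_Ed_Vx_left delta_Ed_Vx_right)
qed

text \<open>The cocycle identity for \<open>[e\<^sub>j, e\<^sub>i] \<in> \<frak>z\<close>, evaluated at \<open>(jw, e\<^sub>c)\<close> with \<open>w\<close> a
  neighbour of \<open>j\<close>, reads \<open>esign j w * \<delta>(e\<^sub>i)(e\<^sub>w, e\<^sub>c) = 0\<close>.\<close>

lemma delta_Vx_Vx_Vx_off_diagonal:
  assumes i: "i < n" and w: "w \<noteq> i"
  shows "\<delta> (Vx i) (Vx w) (Vx c) = 0"
proof (cases "w < n")
  case True
  obtain j where j: "j \<noteq> i" "j \<noteq> w" "uedge j w \<in> A"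
    using exists_neighbour_avoiding[OF True, of i] uedge_commute by metis
  then have "j < n" using uedge_in_edges_imp by blast
  have "(\<Sum>r\<in>basis n A. br A (unitv (Vx j)) (unitv (Vx i)) r * \<delta> r (Ed (uedge j w)) (Vx c)) = 0"
    unfolding sum_basis by (simp add: delta_Ed_Vx_right)
  then have "adL2 n A (unitv (Vx j)) (\<delta> (Vx i)) (Ed (uedge j w)) (Vx c)
      = adL2 n A (unitv (Vx i)) (\<delta> (Vx j)) (Ed (uedge j w)) (Vx c)"
    using cocycle[of "Vx j" "Vx i" "Ed (uedge j w)" "Vx c"] i \<open>j < n\<close> by simp
  moreover have "i \<noteq> fst (uedge j w)" "i \<noteq> snd (uedge j w)"
    using j w by (auto simp: uedge_def min_def max_def)
  ultimately show ?thesis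
    unfolding adL2_unitv_Vx_Ed_Vx
    using Tf_uedge_unitv[OF j(2,3), of "\<lambda>k. \<delta> (Vx i) (Vx k) (Vx c)"]
      Tf_unitv_off_edge[of i "uedge j w" A "\<lambda>k. \<delta> (Vx j) (Vx k) (Vx c)"] by simp
qed (simp add: i delta_outside_left)

lemma delta_Vx_Vx_Vx: "i < n \<Longrightarrow> \<delta> (Vx i) (Vx a) (Vx b) = 0"
  using delta_Vx_Vx_Vx_off_diagonal[of i a b] delta_Vx_Vx_Vx_off_diagonal[of i b a]
    delta_antisym[of "Vx i" "Vx a" "Vx b"] eq_neg_self_imp_zero
  by (cases "a = i"; cases "b = i") auto

lemma delta_Vx_Vx_Ed_eq_sum_wedge:
  assumes i: "i < n"
  shows "(\<Sum>\<alpha>\<in>A. wedge (wvec n (\<lambda>r. delta_D \<delta> \<alpha> r i)) (unitv (Ed \<alpha>)) (Vx r) (Ed \<beta>))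
       = \<delta> (Vx i) (Vx r) (Ed \<beta>)"
proof -
  have "(\<Sum>\<alpha>\<in>A. wedge (wvec n (\<lambda>r. delta_D \<delta> \<alpha> r i)) (unitv (Ed \<alpha>)) (Vx r) (Ed \<beta>))
      = (\<Sum>\<alpha>\<in>A. if \<beta> = \<alpha> then (if r < n then delta_D \<delta> \<alpha> r i else 0) else 0)"
    by (rule sum.cong) (auto simp: wedge_def wvec_def unitv_def)
  also have "\<dots> = (if \<beta> \<in> A \<and> r < n then delta_D \<delta> \<beta> r i else 0)"
    using finite_edges by simp
  also have "\<dots> = \<delta> (Vx i) (Vx r) (Ed \<beta>)"
    using i delta_outside_left[of "Vx i" "Vx r"] delta_outside_right[of "Vx i" "Ed \<beta>"]
    by (auto simp: delta_D_def)
  finally show ?thesis .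
qed

lemma delta_Vx_eq:
  assumes i: "i < n"
  shows "\<delta> (Vx i) = (\<lambda>p q. (\<Sum>\<alpha>\<in>A. wedge (wvec n (\<lambda>r. delta_D \<delta> \<alpha> r i)) (unitv (Ed \<alpha>)) p q)
                          + zmat (delta_phi \<delta> i) p q)"
proof (intro ext)
  fix p q
  show "\<delta> (Vx i) p q = (\<Sum>\<alpha>\<in>A. wedge (wvec n (\<lambda>r. delta_D \<delta> \<alpha> r i)) (unitv (Ed \<alpha>)) p q)
                       + zmat (delta_phi \<delta> i) p q"
  proof (cases p; cases q)
    fix r s assume "p = Vx r" "q = Vx s"
    then show ?thesis
      using i delta_Vx_Vx_Vx by (simp add: zmat_def wedge_def unitv_def)
  next
    fix r \<beta> assume "p = Vx r" "q = Ed \<beta>"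
    then show ?thesis
      using delta_Vx_Vx_Ed_eq_sum_wedge[OF i] by (simp add: zmat_def)
  next
    fix \<alpha> s assume pq: "p = Ed \<alpha>" "q = Vx s"
    have "(\<Sum>\<beta>\<in>A. wedge (wvec n (\<lambda>r. delta_D \<delta> \<beta> r i)) (unitv (Ed \<beta>)) (Ed \<alpha>) (Vx s))
        = - (\<Sum>\<beta>\<in>A. wedge (wvec n (\<lambda>r. delta_D \<delta> \<beta> r i)) (unitv (Ed \<beta>)) (Vx s) (Ed \<alpha>))"
      by (simp add: sum_negf[symmetric] wedge_def)
    with pq show ?thesis
      using delta_Vx_Vx_Ed_eq_sum_wedge[OF i, of s \<alpha>] delta_antisym[of "Vx i" "Ed \<alpha>" "Vx s"] i
      by (simp add: zmat_def)
  next
    fix \<alpha> \<beta> assume "p = Ed \<alpha>" "q = Ed \<beta>"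
    then show ?thesis
      by (simp add: zmat_def wedge_def wvec_def delta_phi_def)
  qed
qed

lemma cojac_delta_z: "cojac A (delta_z \<delta>)"
  unfolding cojac_def
proof (intro ballI)
  fix \<gamma> p q u assume \<gamma>: "\<gamma> \<in> A" and pqu: "p \<in> A" "q \<in> A" "u \<in> A"
  have "(\<Sum>r\<in>basis n A. \<Sum>s\<in>basis n A. \<delta> (Ed \<gamma>) r s
          * (w21 (\<delta> r) (unitv s) (Ed p) (Ed q) (Ed u) - w12 (unitv r) (\<delta> s) (Ed p) (Ed q) (Ed u))) = 0"
    using cobracket \<gamma> pqu unfolding cobracket_def cojac_def by simp
  moreover have "(\<Sum>r\<in>basis n A. \<Sum>s\<in>basis n A. \<delta> (Ed \<gamma>) r s
          * (w21 (\<delta> r) (unitv s) (Ed p) (Ed q) (Ed u) - w12 (unitv r) (\<delta> s) (Ed p) (Ed q) (Ed u)))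
    = (\<Sum>r\<in>A. \<Sum>s\<in>A. delta_z \<delta> \<gamma> r s
          * (w21 (delta_z \<delta> r) (unitv s) p q u - w12 (unitv r) (delta_z \<delta> s) p q u))"
    unfolding sum_basis
    by (simp add: \<gamma> delta_Ed_Vx_left delta_Ed_Vx_right delta_z_def w21_def w12_def unitv_def)
  ultimately show "(\<Sum>r\<in>A. \<Sum>s\<in>A. delta_z \<delta> \<gamma> r s
          * (w21 (delta_z \<delta> r) (unitv s) p q u - w12 (unitv r) (delta_z \<delta> s) p q u)) = 0"
    by simp
qed

text \<open>Co-Jacobi at \<open>(e\<^sub>c; e\<^sub>t, \<alpha>, \<beta>)\<close>.\<close>

lemma commutator_delta_D:
  assumes \<alpha>: "\<alpha> \<in> A" and \<beta>: "\<beta> \<in> A" and t: "t < n" and c: "c < n"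
  shows "mmul n (delta_D \<delta> \<alpha>) (delta_D \<delta> \<beta>) t c - mmul n (delta_D \<delta> \<beta>) (delta_D \<delta> \<alpha>) t c
       = (\<Sum>\<gamma>\<in>A. delta_z \<delta> \<gamma> \<alpha> \<beta> * delta_D \<delta> \<gamma> t c)"
proof -
  let ?T = "\<lambda>r. \<delta> (Vx c) r (Ed \<beta>) * \<delta> r (Vx t) (Ed \<alpha>) + \<delta> (Vx c) r (Vx t) * \<delta> r (Ed \<alpha>) (Ed \<beta>)
              + \<delta> (Vx c) r (Ed \<alpha>) * \<delta> r (Ed \<beta>) (Vx t)"
  have "(\<Sum>r\<in>basis n A. ?T r) = 0"
    using cojac_cyclic[of "Vx c" "Vx t" "Ed \<alpha>" "Ed \<beta>"] \<alpha> \<beta> t c by simp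
  moreover have "(\<Sum>k<n. ?T (Vx k))
      = mmul n (delta_D \<delta> \<alpha>) (delta_D \<delta> \<beta>) t c - mmul n (delta_D \<delta> \<beta>) (delta_D \<delta> \<alpha>) t c"
  proof -
    have "?T (Vx k) = delta_D \<delta> \<beta> k c * delta_D \<delta> \<alpha> t k - delta_D \<delta> \<alpha> k c * delta_D \<delta> \<beta> t k"
      if "k < n" for k
      using delta_antisym[of "Vx k" "Ed \<beta>" "Vx t"] that c by (simp add: delta_Vx_Vx_Vx delta_D_def)
    then show ?thesis
      by (simp add: mmul_def sum_subtractf mult.commute)
  qed
  moreover have "(\<Sum>\<gamma>\<in>A. ?T (Ed \<gamma>)) = - (\<Sum>\<gamma>\<in>A. delta_z \<delta> \<gamma> \<alpha> \<beta> * delta_D \<delta> \<gamma> t c)"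
  proof -
    have "?T (Ed \<gamma>) = - (delta_z \<delta> \<gamma> \<alpha> \<beta> * delta_D \<delta> \<gamma> t c)" if "\<gamma> \<in> A" for \<gamma>
      using delta_antisym[of "Vx c" "Ed \<gamma>" "Vx t"] that c
      by (simp add: delta_Ed_Vx_left delta_Ed_Vx_right delta_D_def delta_z_def)
    then show ?thesis
      by (simp add: sum_negf)
  qed
  ultimately show ?thesis
    unfolding sum_basis by (simp add: eq_neg_iff_add_eq_0)
qed

lemma adL2_unitv_Vx_delta_Vx:
  assumes i: "i < n" and j: "j < n"
  shows "adL2 n A (unitv (Vx i)) (\<delta> (Vx j)) (Ed \<alpha>) (Ed \<beta>)
     = Tf A \<alpha> (unitv i) (mapp n (delta_D \<delta> \<beta>) (unitv j))
     - Tf A \<beta> (unitv i) (mapp n (delta_D \<delta> \<alpha>) (unitv j))"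
proof -
  have "(\<lambda>k. \<delta> (Vx j) (Ed \<alpha>) (Vx k)) = (\<lambda>k. - mapp n (delta_D \<delta> \<alpha>) (unitv j) k)"
    using delta_antisym[of "Vx j" "Ed \<alpha>"] j by (simp add: mapp_unitv delta_D_def)
  moreover have "Tf A \<beta> x (\<lambda>k. - y k) = - Tf A \<beta> x y" for x y :: "nat \<Rightarrow> 'k"
    by (simp add: Tf_def algebra_simps)
  ultimately show ?thesis
    unfolding adL2_unitv_Vx_Ed_Ed using j by (simp add: mapp_unitv delta_D_def)
qed

text \<open>The cocycle identity for \<open>[e\<^sub>i, e\<^sub>j]\<close> evaluated at \<open>(\<alpha>, \<beta>)\<close>; the general identity follows
  by bilinearity.\<close>

lemma T_relation_unitv:
  assumes i: "i < n" and j: "j < n" and \<alpha>: "\<alpha> \<in> A" and \<beta>: "\<beta> \<in> A"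
  shows "(\<Sum>\<gamma>\<in>A. Tf A \<gamma> (unitv i) (unitv j) * delta_z \<delta> \<gamma> \<alpha> \<beta>)
    = (Tf A \<alpha> (mapp n (delta_D \<delta> \<beta>) (unitv i)) (unitv j) + Tf A \<alpha> (unitv i) (mapp n (delta_D \<delta> \<beta>) (unitv j)))
    - (Tf A \<beta> (mapp n (delta_D \<delta> \<alpha>) (unitv i)) (unitv j) + Tf A \<beta> (unitv i) (mapp n (delta_D \<delta> \<alpha>) (unitv j)))"
proof -
  have "(\<Sum>r\<in>basis n A. br A (unitv (Vx i)) (unitv (Vx j)) r * \<delta> r (Ed \<alpha>) (Ed \<beta>))
     = (\<Sum>\<gamma>\<in>A. Tf A \<gamma> (unitv i) (unitv j) * delta_z \<delta> \<gamma> \<alpha> \<beta>)"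
    unfolding sum_basis by (simp add: br_unitv_Vx delta_z_def)
  then show ?thesis
    using cocycle[of "Vx i" "Vx j" "Ed \<alpha>" "Ed \<beta>"] i j adL2_unitv_Vx_delta_Vx[OF i j]
      adL2_unitv_Vx_delta_Vx[OF j i] Tf_antisym[of A \<alpha> "mapp n (delta_D \<delta> \<beta>) (unitv i)"]
      Tf_antisym[of A \<beta> "mapp n (delta_D \<delta> \<alpha>) (unitv i)"]
    by (simp add: algebra_simps)
qed

lemma T_relation:
  assumes \<alpha>: "\<alpha> \<in> A" and \<beta>: "\<beta> \<in> A"
  shows "(\<Sum>\<gamma>\<in>A. Tf A \<gamma> x y * delta_z \<delta> \<gamma> \<alpha> \<beta>)
    = (\<Sum>\<gamma>\<in>A. \<Sum>\<eta>\<in>A. (Tf A \<gamma> (mapp n (delta_D \<delta> \<eta>) x) y + Tf A \<gamma> x (mapp n (delta_D \<delta> \<eta>) y))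
                       * wedge (unitv \<gamma>) (unitv \<eta>) \<alpha> \<beta>)"
proof -
  define F where "F x y = (\<Sum>\<gamma>\<in>A. Tf A \<gamma> x y * delta_z \<delta> \<gamma> \<alpha> \<beta>)
    - ((Tf A \<alpha> (mapp n (delta_D \<delta> \<beta>) x) y + Tf A \<alpha> x (mapp n (delta_D \<delta> \<beta>) y))
      - (Tf A \<beta> (mapp n (delta_D \<delta> \<alpha>) x) y + Tf A \<beta> x (mapp n (delta_D \<delta> \<alpha>) y)))" for x y
  have "coord_linear n (\<lambda>x. F x y)" for y
    unfolding F_def
    by (intro coord_linear_diff coord_linear_add coord_linear_sum coord_linear_mult_const
        coord_linear_Tf_left coord_linear_Tf_mapp_left)
  moreover have "coord_linear n (\<lambda>y. F x y)" for x
    unfolding F_def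
    by (intro coord_linear_diff coord_linear_add coord_linear_sum coord_linear_mult_const
        coord_linear_Tf_right coord_linear_Tf_mapp_right)
  moreover have "F (unitv i) (unitv j) = 0" if "i < n" "j < n" for i j
    using T_relation_unitv[OF that \<alpha> \<beta>] by (simp add: F_def)
  ultimately have "F x y = 0"
    by (metis coord_linear_eq_zero)
  then show ?thesis
    using sum_wedge_unitv[OF finite_edges \<alpha> \<beta>, where
        F = "\<lambda>\<gamma> \<eta>. Tf A \<gamma> (mapp n (delta_D \<delta> \<eta>) x) y + Tf A \<gamma> x (mapp n (delta_D \<delta> \<eta>) y)"]
    by (simp add: F_def)
qed

lemma sum_w21_phiv_delta_D_unitv:
  assumes c: "c < n" and pqu: "p \<in> A" "q \<in> A" "u \<in> A"
  shows "(\<Sum>\<gamma>\<in>A. w21 (phiv n (delta_phi \<delta>) (mapp n (delta_D \<delta> \<gamma>) (unitv c))) (unitv \<gamma>) p q u)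
       = (\<Sum>k<n. \<delta> (Vx c) (Vx k) (Ed u) * \<delta> (Vx k) (Ed p) (Ed q)
                + \<delta> (Vx c) (Vx k) (Ed p) * \<delta> (Vx k) (Ed q) (Ed u)
                + \<delta> (Vx c) (Vx k) (Ed q) * \<delta> (Vx k) (Ed u) (Ed p))"
proof -
  define X where "X \<gamma> a b = (\<Sum>k<n. delta_D \<delta> \<gamma> k c * delta_phi \<delta> k a b)" for \<gamma> a b
  have "phiv n (delta_phi \<delta>) (mapp n (delta_D \<delta> \<gamma>) (unitv c)) = X \<gamma>" for \<gamma>
    by (intro ext) (simp add: mapp_unitv[OF c] phiv_def X_def)
  then have "(\<Sum>\<gamma>\<in>A. w21 (phiv n (delta_phi \<delta>) (mapp n (delta_D \<delta> \<gamma>) (unitv c))) (unitv \<gamma>) p q u)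
     = (\<Sum>\<gamma>\<in>A. X \<gamma> p q * unitv \<gamma> u) + (\<Sum>\<gamma>\<in>A. X \<gamma> q u * unitv \<gamma> p)
     + (\<Sum>\<gamma>\<in>A. X \<gamma> u p * unitv \<gamma> q)"
    by (simp add: w21_def sum.distrib)
  also have "\<dots> = X u p q + X p q u + X q u p"
    using pqu finite_edges by (simp add: sum_mult_unitv)
  finally show ?thesis
    by (simp add: X_def sum.distrib delta_D_def delta_phi_def)
qed

lemma sum_ordered_delta_phi_unitv:
  assumes c: "c < n" and pqu: "p \<in> A" "q \<in> A" "u \<in> A"
  shows "(\<Sum>\<alpha>\<in>A. \<Sum>\<beta>\<in>A. if \<alpha> < \<beta> then phiv n (delta_phi \<delta>) (unitv c) \<alpha> \<beta>
             * (w21 (delta_z \<delta> \<alpha>) (unitv \<beta>) p q u - w12 (unitv \<alpha>) (delta_z \<delta> \<beta>) p q u) else 0)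
       = (\<Sum>\<gamma>\<in>A. \<delta> (Vx c) (Ed \<gamma>) (Ed u) * \<delta> (Ed \<gamma>) (Ed p) (Ed q)
                + \<delta> (Vx c) (Ed \<gamma>) (Ed p) * \<delta> (Ed \<gamma>) (Ed q) (Ed u)
                + \<delta> (Vx c) (Ed \<gamma>) (Ed q) * \<delta> (Ed \<gamma>) (Ed u) (Ed p))"
proof -
  have antisym: "delta_phi \<delta> c a b = - delta_phi \<delta> c b a" for a b
    unfolding delta_phi_def by (rule delta_antisym) (simp add: c)
  have "(\<Sum>\<alpha>\<in>A. \<Sum>\<beta>\<in>A. if \<alpha> < \<beta> then phiv n (delta_phi \<delta>) (unitv c) \<alpha> \<beta>
             * (w21 (delta_z \<delta> \<alpha>) (unitv \<beta>) p q u - w12 (unitv \<alpha>) (delta_z \<delta> \<beta>) p q u) else 0)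
      = (\<Sum>\<alpha>\<in>A. \<Sum>\<beta>\<in>A. if \<alpha> < \<beta> then delta_phi \<delta> c \<alpha> \<beta>
             * (w21 (delta_z \<delta> \<alpha>) (unitv \<beta>) p q u - w21 (delta_z \<delta> \<beta>) (unitv \<alpha>) p q u) else 0)"
    by (simp add: phiv_unitv[OF c] w12_eq_w21 cong: if_cong)
  also have "\<dots> = (\<Sum>\<alpha>\<in>A. \<Sum>\<beta>\<in>A. delta_phi \<delta> c \<alpha> \<beta> * w21 (delta_z \<delta> \<alpha>) (unitv \<beta>) p q u)"
    by (rule sum_ordered_pairs_antisym[OF antisym])
  also have "\<dots> = (\<Sum>\<alpha>\<in>A. \<Sum>\<beta>\<in>A. (delta_phi \<delta> c \<alpha> \<beta> * delta_z \<delta> \<alpha> p q) * unitv \<beta> u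
                 + (delta_phi \<delta> c \<alpha> \<beta> * delta_z \<delta> \<alpha> q u) * unitv \<beta> p
                 + (delta_phi \<delta> c \<alpha> \<beta> * delta_z \<delta> \<alpha> u p) * unitv \<beta> q)"
    by (intro sum.cong refl) (simp add: w21_def algebra_simps)
  also have "\<dots> = (\<Sum>\<alpha>\<in>A. delta_phi \<delta> c \<alpha> u * delta_z \<delta> \<alpha> p q + delta_phi \<delta> c \<alpha> p * delta_z \<delta> \<alpha> q u
                 + delta_phi \<delta> c \<alpha> q * delta_z \<delta> \<alpha> u p)"
    using pqu finite_edges by (simp add: sum.distrib sum_mult_unitv)
  finally show ?thesis
    by (simp add: delta_phi_def delta_z_def)
qed

text \<open>Co-Jacobi at \<open>(e\<^sub>c; p, q, u)\<close>, split into its vertex and edge parts.\<close>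

lemma phi_relation_unitv:
  assumes c: "c < n" and pqu: "p \<in> A" "q \<in> A" "u \<in> A"
  shows "(\<Sum>\<gamma>\<in>A. w21 (phiv n (delta_phi \<delta>) (mapp n (delta_D \<delta> \<gamma>) (unitv c))) (unitv \<gamma>) p q u)
       + (\<Sum>\<alpha>\<in>A. \<Sum>\<beta>\<in>A. if \<alpha> < \<beta> then phiv n (delta_phi \<delta>) (unitv c) \<alpha> \<beta>
             * (w21 (delta_z \<delta> \<alpha>) (unitv \<beta>) p q u - w12 (unitv \<alpha>) (delta_z \<delta> \<beta>) p q u) else 0) = 0"
  using cojac_cyclic[of "Vx c" "Ed p" "Ed q" "Ed u"] c pqu
  unfolding sum_w21_phiv_delta_D_unitv[OF assms] sum_ordered_delta_phi_unitv[OF assms]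
  by (simp add: sum_basis)

lemma phi_relation:
  assumes "p \<in> A" "q \<in> A" "u \<in> A"
  shows "(\<Sum>\<gamma>\<in>A. w21 (phiv n (delta_phi \<delta>) (mapp n (delta_D \<delta> \<gamma>) v)) (unitv \<gamma>) p q u)
       + (\<Sum>\<alpha>\<in>A. \<Sum>\<beta>\<in>A. if \<alpha> < \<beta> then phiv n (delta_phi \<delta>) v \<alpha> \<beta>
             * (w21 (delta_z \<delta> \<alpha>) (unitv \<beta>) p q u - w12 (unitv \<alpha>) (delta_z \<delta> \<beta>) p q u) else 0) = 0"
proof (rule coord_linear_eq_zero[where x = v])
  have "coord_linear n (\<lambda>v. phiv n \<phi> (mapp n M v) a b)" for \<phi> M a b
    by (rule coord_linear_comp[OF coord_linear_phiv coord_linear_mapp])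
  then show "coord_linear n (\<lambda>v.
         (\<Sum>\<gamma>\<in>A. w21 (phiv n (delta_phi \<delta>) (mapp n (delta_D \<delta> \<gamma>) v)) (unitv \<gamma>) p q u)
       + (\<Sum>\<alpha>\<in>A. \<Sum>\<beta>\<in>A. if \<alpha> < \<beta> then phiv n (delta_phi \<delta>) v \<alpha> \<beta>
             * (w21 (delta_z \<delta> \<alpha>) (unitv \<beta>) p q u - w12 (unitv \<alpha>) (delta_z \<delta> \<beta>) p q u) else 0))"
    unfolding w21_def
    by (intro coord_linear_add coord_linear_sum coord_linear_mult_const coord_linear_if coord_linear_phiv)
qed (rule phi_relation_unitv[OF _ assms])

lemma cobracket_structure:
  "(\<forall>\<gamma>\<in>A. in_L2z n A (\<delta> (Ed \<gamma>)))
   \<and> (\<forall>i<n. in_WZ_L2z n A (\<delta> (Vx i)))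
   \<and> (\<exists>(\<delta>z :: nat \<times> nat \<Rightarrow> nat \<times> nat \<Rightarrow> nat \<times> nat \<Rightarrow> 'k)
        (D :: nat \<times> nat \<Rightarrow> nat \<Rightarrow> nat \<Rightarrow> 'k)
        (\<phi> :: nat \<Rightarrow> nat \<times> nat \<Rightarrow> nat \<times> nat \<Rightarrow> 'k).
        (\<forall>\<gamma>\<in>A. \<delta> (Ed \<gamma>) = zmat (\<delta>z \<gamma>))
      \<and> (\<forall>i<n. \<delta> (Vx i) = (\<lambda>p q. (\<Sum>\<alpha>\<in>A. wedge (wvec n (\<lambda>r. D \<alpha> r i)) (unitv (Ed \<alpha>)) p q)
                                    + zmat (\<phi> i) p q))
      \<and> cojac A \<delta>z
      \<and> (\<forall>\<alpha>\<in>A. \<forall>\<beta>\<in>A. \<alpha> < \<beta> \<longrightarrow> (\<forall>r<n. \<forall>c<n.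
            mmul n (D \<alpha>) (D \<beta>) r c - mmul n (D \<beta>) (D \<alpha>) r c = (\<Sum>\<gamma>\<in>A. \<delta>z \<gamma> \<alpha> \<beta> * D \<gamma> r c)))
      \<and> (\<forall>x y :: nat \<Rightarrow> 'k. \<forall>a\<in>A. \<forall>b\<in>A.
            (\<Sum>\<gamma>\<in>A. Tf A \<gamma> x y * \<delta>z \<gamma> a b)
            = (\<Sum>\<gamma>\<in>A. \<Sum>\<eta>\<in>A. (Tf A \<gamma> (mapp n (D \<eta>) x) y + Tf A \<gamma> x (mapp n (D \<eta>) y))
                                 * wedge (unitv \<gamma>) (unitv \<eta>) a b))
      \<and> (\<forall>v :: nat \<Rightarrow> 'k. \<forall>p\<in>A. \<forall>q\<in>A. \<forall>u\<in>A.
            (\<Sum>\<gamma>\<in>A. w21 (phiv n \<phi> (mapp n (D \<gamma>) v)) (unitv \<gamma>) p q u)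
          + (\<Sum>\<alpha>\<in>A. \<Sum>\<beta>\<in>A. if \<alpha> < \<beta> then phiv n \<phi> v \<alpha> \<beta>
                 * (w21 (\<delta>z \<alpha>) (unitv \<beta>) p q u - w12 (unitv \<alpha>) (\<delta>z \<beta>) p q u) else 0)
          = 0))"
proof (intro conjI exI[of _ "delta_z \<delta>"] exI[of _ "delta_D \<delta>"] exI[of _ "delta_phi \<delta>"])
  show "\<forall>\<gamma>\<in>A. in_L2z n A (\<delta> (Ed \<gamma>))"
    using edge_delta_in_L2z by blast
  show "\<forall>i<n. in_WZ_L2z n A (\<delta> (Vx i))"
    by (simp add: in_WZ_L2z_def delta_L2 delta_Vx_Vx_Vx)
qed (simp_all add: delta_Ed_eq_zmat delta_Vx_eq cojac_delta_z commutator_delta_D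
    T_relation phi_relation)

end

theorem mainTheorem12:
  fixes n :: nat and A :: "(nat \<times> nat) set"
  assumes simple: "A \<subseteq> {(i, j). i < j \<and> j < n}"
    and deg: "\<forall>e<n. 2 \<le> card {\<alpha>\<in>A. fst \<alpha> = e \<or> snd \<alpha> = e}"
  shows "(\<forall>B :: gidx \<Rightarrow> gidx \<Rightarrow> 'k::field_char_0. is_L2 n A B \<longrightarrow> (invariant n A B \<longleftrightarrow> in_L2z n A B))
    \<and> tst_type TYPE('k) n A
    \<and> (\<forall>\<delta> :: gidx \<Rightarrow> gidx \<Rightarrow> gidx \<Rightarrow> 'k. cobracket n A \<delta> \<longrightarrow>
         (\<forall>\<gamma>\<in>A. in_L2z n A (\<delta> (Ed \<gamma>)))
       \<and> (\<forall>i<n. in_WZ_L2z n A (\<delta> (Vx i)))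
       \<and> (\<exists>(\<delta>z :: nat \<times> nat \<Rightarrow> nat \<times> nat \<Rightarrow> nat \<times> nat \<Rightarrow> 'k)
            (D :: nat \<times> nat \<Rightarrow> nat \<Rightarrow> nat \<Rightarrow> 'k)
            (\<phi> :: nat \<Rightarrow> nat \<times> nat \<Rightarrow> nat \<times> nat \<Rightarrow> 'k).
            (\<forall>\<gamma>\<in>A. \<delta> (Ed \<gamma>) = zmat (\<delta>z \<gamma>))
          \<and> (\<forall>i<n. \<delta> (Vx i) = (\<lambda>p q. (\<Sum>\<alpha>\<in>A. wedge (wvec n (\<lambda>r. D \<alpha> r i)) (unitv (Ed \<alpha>)) p q)
                                        + zmat (\<phi> i) p q))
          \<and> cojac A \<delta>z
          \<and> (\<forall>\<alpha>\<in>A. \<forall>\<beta>\<in>A. \<alpha> < \<beta> \<longrightarrow> (\<forall>r<n. \<forall>c<n.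
                mmul n (D \<alpha>) (D \<beta>) r c - mmul n (D \<beta>) (D \<alpha>) r c = (\<Sum>\<gamma>\<in>A. \<delta>z \<gamma> \<alpha> \<beta> * D \<gamma> r c)))
          \<and> (\<forall>x y :: nat \<Rightarrow> 'k. \<forall>a\<in>A. \<forall>b\<in>A.
                (\<Sum>\<gamma>\<in>A. Tf A \<gamma> x y * \<delta>z \<gamma> a b)
                = (\<Sum>\<gamma>\<in>A. \<Sum>\<eta>\<in>A. (Tf A \<gamma> (mapp n (D \<eta>) x) y + Tf A \<gamma> x (mapp n (D \<eta>) y))
                                     * wedge (unitv \<gamma>) (unitv \<eta>) a b))
          \<and> (\<forall>v :: nat \<Rightarrow> 'k. \<forall>p\<in>A. \<forall>q\<in>A. \<forall>u\<in>A.
                (\<Sum>\<gamma>\<in>A. w21 (phiv n \<phi> (mapp n (D \<gamma>) v)) (unitv \<gamma>) p q u)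
              + (\<Sum>\<alpha>\<in>A. \<Sum>\<beta>\<in>A. if \<alpha> < \<beta> then phiv n \<phi> v \<alpha> \<beta>
                     * (w21 (\<delta>z \<alpha>) (unitv \<beta>) p q u - w12 (unitv \<alpha>) (\<delta>z \<beta>) p q u) else 0)
              = 0)))"
proof -
  interpret min_degree_two_graph n A
    using simple deg by unfold_locales
  have "graph_cobracket n A \<delta>" if "cobracket n A \<delta>" for \<delta> :: "gidx \<Rightarrow> gidx \<Rightarrow> gidx \<Rightarrow> 'k"
    using that by unfold_locales
  then show ?thesis
    by (intro graph_cobracket.cobracket_structure conjI[OF _ conjI] allI impI
        invariant_iff_in_L2z tst_type)
qed

end
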